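(* Let $E,F$ be nondeterministic expressions, $P$ a probabilistic expression, $X$ a variable and $0<p<1$. Then $\mathrm{rec}\,X.(\tau.(\partial(X+E)\oplus_pP)+F)\ \simeq\ \mathrm{rec}\,X.(\tau.(\partial(X+E)\oplus_pP)+\tau.P+F)$.
   Context: Fix a set $\mathsf{Act}$ of actions containing $\tau$ and a set $\mathsf{Var}$ of variables. Nondeterministic expressions: $E ::= 0 \mid X \mid \alpha.P \mid \mathrm{rec}\,X.E \mid E + E$; probabilistic expressions: $P ::= \partial(E) \mid P \oplus_p P$ ($0<p<1$). $\mathrm{rec}\,X$ binds $X$; closed means no free variables; $E[\vec F/\vec X]$ is capture-avoiding substitution. Subdistributions $\mu$ over $S$: $\mu:S\to\mathbb R_{\ge0}$, $|\mu|=\sum\mu(s)\le1$; $\delta_s$ Dirac. Semantics: least relations with $\partial(E)\mapsto\delta_E$; $P\oplus_pQ\mapsto p\mu+(1-p)\nu$ if $P\mapsto\mu,Q\mapsto\nu$; $\alpha.P\xrightarrow{\alpha}\mu$ if $P\mapsto\mu$; $\mathrm{rec}\,X.E\xrightarrow{\alpha}\mu$ if $E[\mathrm{rec}\,X.E/X]\xrightarrow{\alpha}\mu$; $E+F\xrightarrow{\alpha}\mu$ and $F+E\xrightarrow{\alpha}\mu$ if $E\xrightarrow{\alpha}\mu$. Combined transitions on subdistributions: least relation with $\delta_E\xrightarrow{\alpha}\mu$ if $E\xrightarrow{\alpha}\mu$, closed under $\sum p_i\nu_i\xrightarrow{\alpha}\sum p_i\mu_i$ ($\nu_i\xrightarrow{\alpha}\mu_i$,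 $p_i\ge0$, $\sum p_i\le1$). A derivation is $(\mu_i^{\to},\mu_i^{\times})_{i\in\mathbb N}$ with $\mu_i^{\to}\xrightarrow{\tau}\mu^{\to}_{i+1}+\mu^{\times}_{i+1}$; $\mu\Rightarrow\nu$ iff a derivation has $\mu=\mu_0^{\to}+\mu_0^{\times}$, $\nu=\sum_i\mu_i^\times$. $\mu\xRightarrow{\alpha}\nu$ iff $\mu\Rightarrow\xrightarrow{\alpha}\Rightarrow\nu$; $\xRightarrow{\hat\alpha}$ is $\Rightarrow$ for $\alpha=\tau$, else $\xRightarrow{\alpha}$. Lifting of a relation to subdistributions: least relation with $\delta_E\mathcal R\delta_F$ for $E\mathcal RF$, closed under convex combinations with coefficients summing to at most 1. Weak bisimulation on closed expressions: if $E\mathcal RF$ and $E\xrightarrow{\alpha}\mu$ then $F\xRightarrow{\hat\alpha}\nu$ with $\mu\mathcal R\nu$, and symmetrically; $\approx$ is weak bisimilarity. For closed $E,F$: $E\simeq F$ iff $E\xrightarrow{\alpha}\mu$ implies $F\xRightarrow{\alpha}\nu$ with $\mu\approx\nu$ and $F\xrightarrow{\alpha}\nu$ implies $E\xRightarrow{\alpha}\mu$ with $\mu\approx\nu$. For open expressions with free variables $\vec X$: $E\simeq F$ iff $E[\vec G/\vec X]\simeq F[\vec G/\vec X]$ for all closed $\vec G$. *)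

theory Defs
  imports "HOL-Analysis.Analysis"
begin

datatype 'a act = Tau | Act 'a

datatype ('a, 'x) nexp =
    NNil
  | NVar 'x
  | NPre "'a act" "('a, 'x) pexp"
  | NRec 'x "('a, 'x) nexp"
  | NSum "('a, 'x) nexp" "('a, 'x) nexp"
and ('a, 'x) pexp =
    PDirac "('a, 'x) nexp"
  | PChoice "('a, 'x) pexp" real "('a, 'x) pexp"

fun wfn :: "('a, 'x) nexp \<Rightarrow> bool" and wfp :: "('a, 'x) pexp \<Rightarrow> bool" where
  "wfn NNil = True"
| "wfn (NVar x) = True"
| "wfn (NPre a P) = wfp P"
| "wfn (NRec x E) = wfn E"
| "wfn (NSum E F) = (wfn E \<and> wfn F)"
| "wfp (PDirac E) = wfn E"
| "wfp (PChoice P p Q) = (0 < p \<and> p < 1 \<and> wfp P \<and> wfp Q)"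

fun fvn :: "('a, 'x) nexp \<Rightarrow> 'x set" and fvp :: "('a, 'x) pexp \<Rightarrow> 'x set" where
  "fvn NNil = {}"
| "fvn (NVar x) = {x}"
| "fvn (NPre a P) = fvp P"
| "fvn (NRec x E) = fvn E - {x}"
| "fvn (NSum E F) = fvn E \<union> fvn F"
| "fvp (PDirac E) = fvn E"
| "fvp (PChoice P p Q) = fvp P \<union> fvp Q"

text \<open>Simultaneous substitution. It is capture-avoiding whenever the substituted
  expressions are closed, which is the case for every use below.\<close>
fun nsubst :: "('x \<Rightarrow> ('a, 'x) nexp) \<Rightarrow> ('a, 'x) nexp \<Rightarrow> ('a, 'x) nexp"
and psubst :: "('x \<Rightarrow> ('a, 'x) nexp) \<Rightarrow> ('a, 'x) pexp \<Rightarrow> ('a, 'x) pexp" where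
  "nsubst \<sigma> NNil = NNil"
| "nsubst \<sigma> (NVar x) = \<sigma> x"
| "nsubst \<sigma> (NPre a P) = NPre a (psubst \<sigma> P)"
| "nsubst \<sigma> (NRec x E) = NRec x (nsubst (\<sigma>(x := NVar x)) E)"
| "nsubst \<sigma> (NSum E F) = NSum (nsubst \<sigma> E) (nsubst \<sigma> F)"
| "psubst \<sigma> (PDirac E) = PDirac (nsubst \<sigma> E)"
| "psubst \<sigma> (PChoice P p Q) = PChoice (psubst \<sigma> P) p (psubst \<sigma> Q)"

definition proc :: "('a, 'x) nexp \<Rightarrow> bool" where
  "proc E \<longleftrightarrow> wfn E \<and> fvn E = {}"

type_synonym 's subdist = "'s \<Rightarrow> real"

definition is_subdist :: "'s subdist \<Rightarrow> bool" where
  "is_subdist \<mu> \<longleftrightarrow> (\<forall>s. 0 \<le> \<mu> s) \<and> \<mu> summable_on UNIV \<and> infsum \<mu> UNIV \<le> 1"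

definition dirac :: "'s \<Rightarrow> 's subdist" where
  "dirac s = (\<lambda>t. if t = s then 1 else 0)"

inductive pdist :: "('a, 'x) pexp \<Rightarrow> ('a, 'x) nexp subdist \<Rightarrow> bool" where
  pdist_dirac: "pdist (PDirac E) (dirac E)"
| pdist_choice: "pdist P \<mu> \<Longrightarrow> pdist Q \<nu> \<Longrightarrow>
     pdist (PChoice P p Q) (\<lambda>s. p * \<mu> s + (1 - p) * \<nu> s)"

inductive trans :: "('a, 'x) nexp \<Rightarrow> 'a act \<Rightarrow> ('a, 'x) nexp subdist \<Rightarrow> bool" where
  trans_pre: "pdist P \<mu> \<Longrightarrow> trans (NPre \<alpha> P) \<alpha> \<mu>"
| trans_rec: "trans (nsubst (NVar(X := NRec X E)) E) \<alpha> \<mu> \<Longrightarrow> trans (NRec X E) \<alpha> \<mu>"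
| trans_suml: "trans E \<alpha> \<mu> \<Longrightarrow> trans (NSum E F) \<alpha> \<mu>"
| trans_sumr: "trans E \<alpha> \<mu> \<Longrightarrow> trans (NSum F E) \<alpha> \<mu>"

inductive ctrans :: "('a, 'x) nexp subdist \<Rightarrow> 'a act \<Rightarrow> ('a, 'x) nexp subdist \<Rightarrow> bool" where
  ctrans_base: "trans E \<alpha> \<mu> \<Longrightarrow> ctrans (dirac E) \<alpha> \<mu>"
| ctrans_comb: "(\<And>i. ctrans (\<nu> i) \<alpha> (\<mu> i)) \<Longrightarrow> (\<And>i. 0 \<le> p i) \<Longrightarrow> summable p \<Longrightarrow>
     suminf p \<le> 1 \<Longrightarrow>
     ctrans (\<lambda>s. \<Sum>i. p i * \<nu> i s) \<alpha> (\<lambda>s. \<Sum>i. p i * \<mu> i s)"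

definition derivation :: "(nat \<Rightarrow> ('a, 'x) nexp subdist) \<Rightarrow> (nat \<Rightarrow> ('a, 'x) nexp subdist) \<Rightarrow> bool" where
  "derivation \<mu>t \<mu>x \<longleftrightarrow>
     (\<forall>i. is_subdist (\<mu>t i) \<and> is_subdist (\<mu>x i)) \<and>
     (\<forall>i. ctrans (\<mu>t i) Tau (\<lambda>s. \<mu>t (Suc i) s + \<mu>x (Suc i) s))"

definition wtau :: "('a, 'x) nexp subdist \<Rightarrow> ('a, 'x) nexp subdist \<Rightarrow> bool" where
  "wtau \<mu> \<nu> \<longleftrightarrow> (\<exists>\<mu>t \<mu>x. derivation \<mu>t \<mu>x \<and> \<mu> = (\<lambda>s. \<mu>t 0 s + \<mu>x 0 s) \<and>
      \<nu> = (\<lambda>s. \<Sum>i. \<mu>x i s))"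

definition wtrans :: "('a, 'x) nexp subdist \<Rightarrow> 'a act \<Rightarrow> ('a, 'x) nexp subdist \<Rightarrow> bool" where
  "wtrans \<mu> \<alpha> \<nu> \<longleftrightarrow> (\<exists>\<mu>1 \<mu>2. wtau \<mu> \<mu>1 \<and> ctrans \<mu>1 \<alpha> \<mu>2 \<and> wtau \<mu>2 \<nu>)"

definition wtrans_hat :: "('a, 'x) nexp subdist \<Rightarrow> 'a act \<Rightarrow> ('a, 'x) nexp subdist \<Rightarrow> bool" where
  "wtrans_hat \<mu> \<alpha> \<nu> \<longleftrightarrow> (if \<alpha> = Tau then wtau \<mu> \<nu> else wtrans \<mu> \<alpha> \<nu>)"

inductive lift :: "('s \<Rightarrow> 't \<Rightarrow> bool) \<Rightarrow> 's subdist \<Rightarrow> 't subdist \<Rightarrow> bool" for R where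
  lift_base: "R E F \<Longrightarrow> lift R (dirac E) (dirac F)"
| lift_comb: "(\<And>i. lift R (\<mu> i) (\<nu> i)) \<Longrightarrow> (\<And>i. 0 \<le> p i) \<Longrightarrow> summable p \<Longrightarrow>
     suminf p \<le> 1 \<Longrightarrow>
     lift R (\<lambda>s. \<Sum>i. p i * \<mu> i s) (\<lambda>s. \<Sum>i. p i * \<nu> i s)"

definition weak_bisim :: "(('a, 'x) nexp \<Rightarrow> ('a, 'x) nexp \<Rightarrow> bool) \<Rightarrow> bool" where
  "weak_bisim R \<longleftrightarrow> (\<forall>E F. R E F \<longrightarrow> proc E \<and> proc F \<and>
     (\<forall>\<alpha> \<mu>. trans E \<alpha> \<mu> \<longrightarrow> (\<exists>\<nu>. wtrans_hat (dirac F) \<alpha> \<nu> \<and> lift R \<mu> \<nu>)) \<and>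
     (\<forall>\<alpha> \<nu>. trans F \<alpha> \<nu> \<longrightarrow> (\<exists>\<mu>. wtrans_hat (dirac E) \<alpha> \<mu> \<and> lift R \<mu> \<nu>)))"

definition wbisim :: "('a, 'x) nexp \<Rightarrow> ('a, 'x) nexp \<Rightarrow> bool" where
  "wbisim E F \<longleftrightarrow> (\<exists>R. weak_bisim R \<and> R E F)"

definition cong_closed :: "('a, 'x) nexp \<Rightarrow> ('a, 'x) nexp \<Rightarrow> bool" where
  "cong_closed E F \<longleftrightarrow>
     (\<forall>\<alpha> \<mu>. trans E \<alpha> \<mu> \<longrightarrow> (\<exists>\<nu>. wtrans (dirac F) \<alpha> \<nu> \<and> lift wbisim \<mu> \<nu>)) \<and>
     (\<forall>\<alpha> \<nu>. trans F \<alpha> \<nu> \<longrightarrow> (\<exists>\<mu>. wtrans (dirac E) \<alpha> \<mu> \<and> lift wbisim \<mu> \<nu>))"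

text \<open>Extension to open expressions via all closed substitutions (for closed E, F
  the substitution is the identity, so this agrees with cong_closed).\<close>
definition cong :: "('a, 'x) nexp \<Rightarrow> ('a, 'x) nexp \<Rightarrow> bool" where
  "cong E F \<longleftrightarrow> (\<forall>\<sigma>. (\<forall>x. proc (\<sigma> x)) \<longrightarrow> cong_closed (nsubst \<sigma> E) (nsubst \<sigma> F))"

end

(* After a closing substitution the two sides become closed recursions G and H. Let rel be the
   least relation containing (G, H) and the pair formed by the tau-summands
   tau.(d(G + E) +_p P) and tau.(d(H + E) +_p P) + tau.P of their unfoldings, closed under + and
   under plugging pointwise related closed processes into a context; it is a weak bisimulation.
   Every move of a left component is matched by the same move on the right. The only move of H
   without a strong counterpart is its extra tau.P: G answers it with its own tau-loop, which
   falls back to G + E with probability p, and G + E can take that loop again, so summing the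
   geometric series p^i (1 - p) yields a weak tau-transition to the distribution of P. As the
   answer always begins with a genuine transition, the bisimulation is rooted. *)

theory Submission
  imports Defs
begin

section \<open>Substitution\<close>

lemma shows nsubst_cong: "\<forall>y\<in>fvn C. \<sigma> y = \<sigma>' y \<Longrightarrow> nsubst \<sigma> C = nsubst \<sigma>' C"
  and psubst_cong: "\<forall>y\<in>fvp Q. \<sigma> y = \<sigma>' y \<Longrightarrow> psubst \<sigma> Q = psubst \<sigma>' Q"
proof (induction C and Q arbitrary: \<sigma> \<sigma>' and \<sigma> \<sigma>')
  case (NRec x D)
  then show ?case by (auto intro!: NRec.IH)
qed auto

lemma fixes C :: "('a, 'x) nexp" and Q :: "('a, 'x) pexp"
  shows nsubst_NVar: "nsubst NVar C = C"
  and psubst_NVar: "psubst NVar Q = Q"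
proof (induction C and Q)
  case (NRec x D)
  then show ?case by (simp add: fun_upd_idem_iff)
qed auto

lemma nsubst_closed: "fvn C = {} \<Longrightarrow> nsubst \<sigma> C = C"
  using nsubst_cong[of C \<sigma> NVar] nsubst_NVar[of C] by auto

lemma shows fvn_nsubst: "fvn (nsubst \<sigma> C) \<subseteq> (\<Union>y\<in>fvn C. fvn (\<sigma> y))"
  and fvp_psubst: "fvp (psubst \<sigma> Q) \<subseteq> (\<Union>y\<in>fvp Q. fvn (\<sigma> y))"
proof (induction C and Q arbitrary: \<sigma> and \<sigma>)
  case (NRec x D)
  show ?case
  proof
    fix z assume "z \<in> fvn (nsubst \<sigma> (NRec x D))"
    then have z: "z \<in> fvn (nsubst (\<sigma>(x := NVar x)) D)" "z \<noteq> x" by auto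
    then obtain y where "y \<in> fvn D" "z \<in> fvn ((\<sigma>(x := NVar x)) y)" using NRec.IH by blast
    then show "z \<in> (\<Union>y\<in>fvn (NRec x D). fvn (\<sigma> y))" using z by (auto split: if_splits)
  qed
qed (simp; blast)+

lemma shows wfn_nsubst: "wfn C \<Longrightarrow> \<forall>y. wfn (\<sigma> y) \<Longrightarrow> wfn (nsubst \<sigma> C)"
  and wfp_psubst: "wfp Q \<Longrightarrow> \<forall>y. wfn (\<sigma> y) \<Longrightarrow> wfp (psubst \<sigma> Q)"
  by (induction C and Q arbitrary: \<sigma> and \<sigma>) auto

lemma shows nsubst_nsubst: "\<forall>y. fvn (\<tau> y) \<subseteq> {y} \<Longrightarrow>
    nsubst \<rho> (nsubst \<tau> D) = nsubst (\<lambda>y. nsubst \<rho> (\<tau> y)) D"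
  and psubst_psubst: "\<forall>y. fvn (\<tau> y) \<subseteq> {y} \<Longrightarrow>
    psubst \<rho> (psubst \<tau> Q) = psubst (\<lambda>y. nsubst \<rho> (\<tau> y)) Q"
proof (induction D and Q arbitrary: \<rho> \<tau> and \<rho> \<tau>)
  case (NRec x D)
  have agree: "(\<lambda>y. nsubst (\<rho>(x := NVar x)) ((\<tau>(x := NVar x)) y)) =
      (\<lambda>y. nsubst \<rho> (\<tau> y))(x := NVar x)"
  proof
    fix y
    show "nsubst (\<rho>(x := NVar x)) ((\<tau>(x := NVar x)) y) = ((\<lambda>y. nsubst \<rho> (\<tau> y))(x := NVar x)) y"
    proof (cases "y = x")
      case False
      then have "x \<notin> fvn (\<tau> y)" using NRec.prems by blast
      then show ?thesis using False by (auto intro!: nsubst_cong)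
    qed simp
  qed
  have "\<forall>y. fvn ((\<tau>(x := NVar x)) y) \<subseteq> {y}" using NRec.prems by auto
  then have "nsubst (\<rho>(x := NVar x)) (nsubst (\<tau>(x := NVar x)) D) =
      nsubst (\<lambda>y. nsubst (\<rho>(x := NVar x)) ((\<tau>(x := NVar x)) y)) D"
    by (rule NRec.IH)
  then show ?case by (simp only: nsubst.simps agree)
qed auto

lemma nsubst_rec_unfold:
  assumes "\<And>y. fvn (\<sigma> y) = {}"
  shows "nsubst (NVar(Z := T)) (nsubst (\<sigma>(Z := NVar Z)) D) = nsubst (\<sigma>(Z := T)) D"
proof -
  have "(\<lambda>y. nsubst (NVar(Z := T)) ((\<sigma>(Z := NVar Z)) y)) = \<sigma>(Z := T)"
    using assms by (auto simp: nsubst_closed)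
  moreover have "\<forall>y. fvn ((\<sigma>(Z := NVar Z)) y) \<subseteq> {y}" using assms by simp
  ultimately show ?thesis by (metis nsubst_nsubst)
qed

section \<open>Subdistributions\<close>

lemma is_subdist_dirac: "is_subdist (dirac s)"
proof -
  have "dirac s summable_on UNIV \<longleftrightarrow> dirac s summable_on {s}"
    by (rule summable_on_cong_neutral) (auto simp: dirac_def)
  moreover have "infsum (dirac s) UNIV = infsum (dirac s) {s}"
    by (rule infsum_cong_neutral) (auto simp: dirac_def)
  ultimately show ?thesis by (auto simp: is_subdist_def dirac_def)
qed

lemma is_subdist_zero: "is_subdist (\<lambda>s. 0)"
  by (simp add: is_subdist_def)

lemma is_subdist_convex:
  assumes "is_subdist \<mu>" "is_subdist \<nu>" "0 \<le> q" "q \<le> 1"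
  shows "is_subdist (\<lambda>s. q * \<mu> s + (1 - q) * \<nu> s)"
proof -
  have summable: "(\<lambda>s. q * \<mu> s) summable_on UNIV" "(\<lambda>s. (1 - q) * \<nu> s) summable_on UNIV"
    using assms by (auto simp: is_subdist_def intro: summable_on_cmult_right)
  have "infsum (\<lambda>s. q * \<mu> s + (1 - q) * \<nu> s) UNIV = q * infsum \<mu> UNIV + (1 - q) * infsum \<nu> UNIV"
    using summable by (simp add: infsum_add infsum_cmult_right')
  also have "\<dots> \<le> q * 1 + (1 - q) * 1"
    using assms by (intro add_mono mult_left_mono) (auto simp: is_subdist_def)
  finally show ?thesis using assms summable by (auto simp: is_subdist_def intro!: summable_on_add)
qed

lemma is_subdist_scale:
  assumes "is_subdist \<mu>" "0 \<le> q" "q \<le> 1"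
  shows "is_subdist (\<lambda>s. q * \<mu> s)"
  using is_subdist_convex[OF assms(1) is_subdist_zero assms(2,3)] by simp

lemma pdist_is_subdist: "pdist Q \<mu> \<Longrightarrow> wfp Q \<Longrightarrow> is_subdist \<mu>"
  by (induction rule: pdist.induct) (auto intro!: is_subdist_dirac is_subdist_convex)

lemma pdist_unique: "pdist Q \<mu> \<Longrightarrow> pdist Q \<mu>' \<Longrightarrow> \<mu>' = \<mu>"
proof (induction arbitrary: \<mu>' rule: pdist.induct)
  case (pdist_dirac E)
  then show ?case by (cases rule: pdist.cases) auto
next
  case (pdist_choice P \<mu> Q \<nu> p)
  from pdist_choice.prems show ?case
    by (cases rule: pdist.cases) (auto dest: pdist_choice.IH)
qed

lemma trans_is_subdist: "trans E \<alpha> \<mu> \<Longrightarrow> wfn E \<Longrightarrow> is_subdist \<mu>"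
proof (induction rule: trans.induct)
  case (trans_rec X E \<alpha> \<mu>)
  then show ?case by (simp add: wfn_nsubst)
qed (auto intro: pdist_is_subdist)

section \<open>Combined transitions and weak transitions\<close>

lemma ctrans_scale:
  assumes "ctrans \<nu> \<alpha> \<mu>" "0 \<le> c" "c \<le> 1"
  shows "ctrans (\<lambda>s. c * \<nu> s) \<alpha> (\<lambda>s. c * \<mu> s)"
proof -
  let ?p = "\<lambda>i::nat. if i = 0 then c else 0"
  have single: "(\<Sum>i. ?p i * x) = c * x" for x
  proof -
    have "(\<lambda>i. ?p i * x) = (\<lambda>i. if i = 0 then c * x else 0)" by auto
    then show ?thesis using sums_single[of 0 "\<lambda>_. c * x"] sums_unique by metis
  qed
  have "?p sums c" using sums_single[of 0 "\<lambda>_. c"] by simp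
  then have "ctrans (\<lambda>s. \<Sum>i. ?p i * \<nu> s) \<alpha> (\<lambda>s. \<Sum>i. ?p i * \<mu> s)"
    by (intro ctrans_comb[where \<nu>="\<lambda>_. \<nu>" and \<mu>="\<lambda>_. \<mu>"]) (use assms in \<open>auto simp: sums_iff\<close>)
  then show ?thesis by (simp only: single)
qed

lemma ctrans_zero: "ctrans (\<lambda>s::('a, 'x) nexp. 0) Tau (\<lambda>s. 0)"
proof -
  have "ctrans (dirac (NPre Tau (PDirac NNil))) Tau (dirac (NNil :: ('a, 'x) nexp))"
    by (intro ctrans_base trans_pre pdist_dirac)
  from ctrans_scale[OF this, of 0] show ?thesis by simp
qed

lemma lift_convex:
  assumes "lift R \<mu>1 \<nu>1" "lift R \<mu>2 \<nu>2" "0 \<le> q" "q \<le> 1"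
  shows "lift R (\<lambda>s. q * \<mu>1 s + (1 - q) * \<mu>2 s) (\<lambda>s. q * \<nu>1 s + (1 - q) * \<nu>2 s)"
proof -
  let ?p = "\<lambda>i::nat. if i = 0 then q else if i = 1 then 1 - q else 0"
  let ?\<mu> = "\<lambda>i::nat. if i = 0 then \<mu>1 else \<mu>2"
  let ?\<nu> = "\<lambda>i::nat. if i = 0 then \<nu>1 else \<nu>2"
  have two: "(\<Sum>i. ?p i * f i) = (\<Sum>i\<in>{0,1}. ?p i * f i)" for f
    by (rule suminf_finite) auto
  have "summable ?p" by (rule summable_finite[of "{0,1}"]) auto
  then have "lift R (\<lambda>s. \<Sum>i. ?p i * ?\<mu> i s) (\<lambda>s. \<Sum>i. ?p i * ?\<nu> i s)"
    by (intro lift_comb) (use assms two[of "\<lambda>_. 1"] in auto)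
  then show ?thesis using two by simp
qed

lemma lift_mono: "lift R \<mu> \<nu> \<Longrightarrow> (\<And>a b. R a b \<Longrightarrow> R' a b) \<Longrightarrow> lift R' \<mu> \<nu>"
  by (induction rule: lift.induct) (auto intro: lift.intros)

lemma wtau_refl:
  fixes \<mu> :: "('a, 'x) nexp subdist"
  assumes "is_subdist \<mu>"
  shows "wtau \<mu> \<mu>"
proof -
  let ?t = "\<lambda>(i::nat) (s::('a, 'x) nexp). 0::real"
  let ?x = "\<lambda>(i::nat) s. if i = 0 then \<mu> s else 0"
  have "is_subdist (?x i)" for i by (cases "i = 0") (simp_all add: assms is_subdist_zero)
  then have "derivation ?t ?x" unfolding derivation_def using ctrans_zero is_subdist_zero by simp
  moreover have "(\<Sum>i. ?x i s) = \<mu> s" for s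
    using sums_unique[OF sums_single[of 0 "\<lambda>_. \<mu> s"], symmetric] by simp
  ultimately show ?thesis unfolding wtau_def by (intro exI[of _ ?t] exI[of _ ?x]) auto
qed

lemma wtau_ctrans:
  assumes step: "ctrans \<mu> Tau \<mu>'" and "is_subdist \<mu>" and "wtau \<mu>' \<nu>"
  shows "wtau \<mu> \<nu>"
proof -
  obtain t x where d: "derivation t x" and \<mu>': "\<mu>' = (\<lambda>s. t 0 s + x 0 s)"
    and \<nu>: "\<nu> = (\<lambda>s. \<Sum>i. x i s)"
    using \<open>wtau \<mu>' \<nu>\<close> unfolding wtau_def by blast
  let ?t = "case_nat \<mu> t"
  let ?x = "case_nat (\<lambda>s. 0) x"
  have "derivation ?t ?x"
    unfolding derivation_def
  proof (intro conjI allI)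
    fix i
    show "is_subdist (?t i)" "is_subdist (?x i)"
      using d \<open>is_subdist \<mu>\<close> by (cases i; simp add: derivation_def is_subdist_zero)+
    show "ctrans (?t i) Tau (\<lambda>s. ?t (Suc i) s + ?x (Suc i) s)"
      using d step \<mu>' by (cases i) (auto simp: derivation_def)
  qed
  moreover have "(\<Sum>i. ?x i s) = (\<Sum>i. x i s)" for s
  proof -
    \<comment> \<open>the two series have the same sums, so no summability is needed\<close>
    have "(\<lambda>i. ?x i s) sums c \<longleftrightarrow> (\<lambda>i. x i s) sums c" for c
      using sums_Suc_iff[of "\<lambda>i. ?x i s" c] by simp
    then show ?thesis by (simp add: suminf_def)
  qed
  ultimately show ?thesis unfolding wtau_def \<nu> by (intro exI[of _ ?t] exI[of _ ?x]) simp
qed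

text \<open>A \<open>\<tau>\<close>-step that falls back into its source with probability \<open>p\<close> is repeated until it
  leaves; the \<open>i\<close>-th round contributes \<open>p ^ i * (1 - p)\<close> of \<open>\<mu>\<close>.\<close>

lemma wtau_geometric:
  assumes step: "ctrans \<rho> Tau (\<lambda>s. p * \<rho> s + (1 - p) * \<mu> s)"
    and "is_subdist \<rho>" "is_subdist \<mu>" "0 \<le> p" "p < 1"
  shows "wtau (\<lambda>s. p * \<rho> s + (1 - p) * \<mu> s) \<mu>"
proof -
  let ?t = "\<lambda>i s. p ^ Suc i * \<rho> s"
  let ?x = "\<lambda>i s. p ^ i * (1 - p) * \<mu> s"
  have "derivation ?t ?x"
    unfolding derivation_def
  proof (intro conjI allI)
    fix i :: nat
    have a: "0 \<le> p ^ Suc i" "p ^ Suc i \<le> 1" "0 \<le> p ^ i * (1 - p)" "p ^ i * (1 - p) \<le> 1"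
      using assms by (auto intro!: mult_le_one power_le_one)
    show "is_subdist (?t i)" using is_subdist_scale[OF assms(2) a(1,2)] .
    show "is_subdist (?x i)" using is_subdist_scale[OF assms(3) a(3,4)] .
    have "ctrans (?t i) Tau (\<lambda>s. p ^ Suc i * (p * \<rho> s + (1 - p) * \<mu> s))"
      by (rule ctrans_scale[OF step a(1,2)])
    then show "ctrans (?t i) Tau (\<lambda>s. ?t (Suc i) s + ?x (Suc i) s)"
      by (simp add: algebra_simps)
  qed
  moreover have "(\<Sum>i. ?x i s) = \<mu> s" for s
  proof -
    have "(\<lambda>i. p ^ i * ((1 - p) * \<mu> s)) sums (1 / (1 - p) * ((1 - p) * \<mu> s))"
      by (rule sums_mult2, rule geometric_sums) (use assms in auto)
    then show ?thesis using assms by (simp add: sums_iff mult.assoc)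
  qed
  ultimately show ?thesis unfolding wtau_def by (intro exI[of _ ?t] exI[of _ ?x]) auto
qed

lemma wtrans_trans:
  assumes "trans A \<alpha> \<mu>" "is_subdist \<mu>"
  shows "wtrans (dirac A) \<alpha> \<mu>"
  using ctrans_base[OF assms(1)] wtau_refl[OF is_subdist_dirac] wtau_refl[OF assms(2)]
  unfolding wtrans_def by blast

lemma wtrans_hat_trans:
  assumes "trans A \<alpha> \<mu>" "is_subdist \<mu>"
  shows "wtrans_hat (dirac A) \<alpha> \<mu>"
proof (cases "\<alpha> = Tau")
  case True
  then show ?thesis
    using wtau_ctrans[OF ctrans_base is_subdist_dirac wtau_refl[OF assms(2)]] assms(1)
    by (simp add: wtrans_hat_def)
qed (use wtrans_trans[OF assms] in \<open>simp add: wtrans_hat_def\<close>)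

definition tau_retry :: "real \<Rightarrow> ('a, 'x) nexp \<Rightarrow> ('a, 'x) nexp subdist \<Rightarrow> bool" where
  "tau_retry p A \<mu> \<longleftrightarrow> is_subdist \<mu> \<and>
     (\<exists>S. trans A Tau (\<lambda>s. p * dirac S s + (1 - p) * \<mu> s) \<and>
          trans S Tau (\<lambda>s. p * dirac S s + (1 - p) * \<mu> s))"

lemma
  assumes "tau_retry p A \<mu>" "0 \<le> p" "p < 1"
  shows tau_retry_wtau: "wtau (dirac A) \<mu>"
    and tau_retry_wtrans: "wtrans (dirac A) Tau \<mu>"
proof -
  obtain S where sd: "is_subdist \<mu>"
    and first: "ctrans (dirac A) Tau (\<lambda>s. p * dirac S s + (1 - p) * \<mu> s)"
    and again: "ctrans (dirac S) Tau (\<lambda>s. p * dirac S s + (1 - p) * \<mu> s)"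
    using assms(1) unfolding tau_retry_def by (blast intro: ctrans_base)
  have loop: "wtau (\<lambda>s. p * dirac S s + (1 - p) * \<mu> s) \<mu>"
    by (rule wtau_geometric[OF again is_subdist_dirac sd assms(2,3)])
  show "wtau (dirac A) \<mu>" by (rule wtau_ctrans[OF first is_subdist_dirac loop])
  show "wtrans (dirac A) Tau \<mu>"
    unfolding wtrans_def using wtau_refl[OF is_subdist_dirac] first loop by blast
qed

definition trans_or_retry ::
    "real \<Rightarrow> ('a, 'x) nexp \<Rightarrow> 'a act \<Rightarrow> ('a, 'x) nexp subdist \<Rightarrow> bool" where
  "trans_or_retry p A \<alpha> \<mu> \<longleftrightarrow> trans A \<alpha> \<mu> \<or> (\<alpha> = Tau \<and> tau_retry p A \<mu>)"

lemma trans_or_retry_mono: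
  "trans_or_retry p A \<alpha> \<mu> \<Longrightarrow> (\<And>\<beta> \<mu>'. trans A \<beta> \<mu>' \<Longrightarrow> trans A' \<beta> \<mu>') \<Longrightarrow>
    trans_or_retry p A' \<alpha> \<mu>"
  unfolding trans_or_retry_def tau_retry_def by blast

lemma
  assumes "trans_or_retry p A \<alpha> \<mu>" "wfn A" "0 \<le> p" "p < 1"
  shows wtrans_trans_or_retry: "wtrans (dirac A) \<alpha> \<mu>"
    and wtrans_hat_trans_or_retry: "wtrans_hat (dirac A) \<alpha> \<mu>"
proof -
  consider (trans) "trans A \<alpha> \<mu>" | (retry) "\<alpha> = Tau" "tau_retry p A \<mu>"
    using assms(1) unfolding trans_or_retry_def by blast
  then have "wtrans (dirac A) \<alpha> \<mu> \<and> wtrans_hat (dirac A) \<alpha> \<mu>"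
  proof cases
    case trans
    then show ?thesis
      using trans_is_subdist[OF trans assms(2)] by (simp add: wtrans_trans wtrans_hat_trans)
  next
    case retry
    then show ?thesis
      using tau_retry_wtau[OF retry(2) assms(3,4)] tau_retry_wtrans[OF retry(2) assms(3,4)]
      by (simp add: wtrans_hat_def)
  qed
  then show "wtrans (dirac A) \<alpha> \<mu>" "wtrans_hat (dirac A) \<alpha> \<mu>" by auto
qed

section \<open>The bisimulation\<close>

locale tau_retry_law =
  fixes X :: 'x and E F :: "('a, 'x) nexp" and P :: "('a, 'x) pexp" and p :: real
  assumes fv: "fvn E \<subseteq> {X}" "fvn F \<subseteq> {X}" "fvp P \<subseteq> {X}"
    and wf: "wfn E" "wfn F" "wfp P"
    and p: "0 < p" "p < 1"
begin

definition "choice = PChoice (PDirac (NSum (NVar X) E)) p P"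
definition "G_body = NSum (NPre Tau choice) F"
definition "H_body = NSum (NSum (NPre Tau choice) (NPre Tau P)) F"
definition "G = NRec X G_body"
definition "H = NRec X H_body"
definition "G_tau = NPre Tau (psubst (\<lambda>_. G) choice)"
definition "H_tau = NSum (NPre Tau (psubst (\<lambda>_. H) choice)) (NPre Tau (psubst (\<lambda>_. H) P))"

lemma fvn_bodies: "fvn G_body \<subseteq> {X}" "fvn H_body \<subseteq> {X}"
  using fv by (auto simp: G_body_def H_body_def choice_def)

lemma proc_G: "proc G" and proc_H: "proc H"
  using fvn_bodies wf p by (auto simp: proc_def G_def H_def G_body_def H_body_def choice_def)

lemma wfp_choice: "wfp choice"
  using wf p by (simp add: choice_def)

lemma G_unfold: "nsubst (NVar(X := G)) G_body = NSum G_tau (nsubst (\<lambda>_. G) F)"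
proof -
  have "nsubst (NVar(X := G)) G_body = nsubst (\<lambda>_. G) G_body"
    using fvn_bodies by (intro nsubst_cong) auto
  then show ?thesis by (simp add: G_body_def G_tau_def)
qed

lemma H_unfold: "nsubst (NVar(X := H)) H_body = NSum H_tau (nsubst (\<lambda>_. H) F)"
proof -
  have "nsubst (NVar(X := H)) H_body = nsubst (\<lambda>_. H) H_body"
    using fvn_bodies by (intro nsubst_cong) auto
  then show ?thesis by (simp add: H_body_def H_tau_def)
qed

text \<open>Contexts in \<open>rel_context\<close> are not variables, so that \<open>rel_cases\<close> below is a plain case
  analysis; \<open>rel_nsubst\<close> recovers substitution into arbitrary contexts.\<close>

inductive rel :: "('a, 'x) nexp \<Rightarrow> ('a, 'x) nexp \<Rightarrow> bool" where
  rel_G_H: "rel G H"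
| rel_G_tau_H_tau: "rel G_tau H_tau"
| rel_NSum: "rel A1 B1 \<Longrightarrow> rel A2 B2 \<Longrightarrow> rel (NSum A1 A2) (NSum B1 B2)"
| rel_context: "\<forall>y. rel (\<sigma> y) (\<sigma>' y) \<Longrightarrow> wfn C \<Longrightarrow> \<forall>y. C \<noteq> NVar y \<Longrightarrow>
    rel (nsubst \<sigma> C) (nsubst \<sigma>' C)"

lemma rel_nsubst:
  assumes "\<forall>y. rel (\<sigma> y) (\<sigma>' y)" "wfn C"
  shows "rel (nsubst \<sigma> C) (nsubst \<sigma>' C)"
proof (cases "\<exists>y. C = NVar y")
  case True
  then show ?thesis using assms(1) by auto
next
  case False
  then show ?thesis using assms by (intro rel_context) auto
qed

lemma rel_proc: "rel A B \<Longrightarrow> proc A \<and> proc B"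
proof (induction rule: rel.induct)
  case rel_G_H
  then show ?case using proc_G proc_H by simp
next
  case rel_G_tau_H_tau
  have "fvp (psubst (\<lambda>_. G) Q) = {}" "fvp (psubst (\<lambda>_. H) Q) = {}" for Q
    using fvp_psubst[of "\<lambda>_. G" Q] fvp_psubst[of "\<lambda>_. H" Q] proc_G proc_H
    by (auto simp: proc_def split: if_splits)
  moreover have "wfp (psubst (\<lambda>_. G) Q)" "wfp (psubst (\<lambda>_. H) Q)" if "wfp Q" for Q
    using wfp_psubst[OF that] proc_G proc_H by (auto simp: proc_def)
  ultimately show ?case using wf wfp_choice by (simp add: proc_def G_tau_def H_tau_def)
next
  case (rel_NSum A1 B1 A2 B2)
  then show ?case by (auto simp: proc_def)
next
  case (rel_context \<sigma> \<sigma>' C)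
  then have "\<forall>y. proc (\<sigma> y) \<and> proc (\<sigma>' y)" by blast
  then show ?case using fvn_nsubst[of \<sigma> C] fvn_nsubst[of \<sigma>' C]
      wfn_nsubst[OF rel_context.hyps(1), of \<sigma>] wfn_nsubst[OF rel_context.hyps(1), of \<sigma>']
    by (auto simp: proc_def)
qed

lemma rel_pdist:
  assumes "wfp Q" "\<forall>y. rel (\<sigma> y) (\<sigma>' y)"
  obtains \<mu> \<nu> where "pdist (psubst \<sigma> Q) \<mu>" "pdist (psubst \<sigma>' Q) \<nu>" "lift rel \<mu> \<nu>"
proof -
  have "\<exists>\<mu> \<nu>. pdist (psubst \<sigma> Q) \<mu> \<and> pdist (psubst \<sigma>' Q) \<nu> \<and> lift rel \<mu> \<nu>"
    using assms(1)
  proof (induction Q rule: pexp.induct[of "\<lambda>_. True"])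
    case (PDirac C)
    have "rel (nsubst \<sigma> C) (nsubst \<sigma>' C)" using PDirac.prems assms(2) by (intro rel_nsubst) auto
    then show ?case by (auto intro!: pdist.intros lift_base)
  next
    case (PChoice Q1 q Q2)
    then obtain \<mu>1 \<nu>1 \<mu>2 \<nu>2 where
      "pdist (psubst \<sigma> Q1) \<mu>1" "pdist (psubst \<sigma>' Q1) \<nu>1" "lift rel \<mu>1 \<nu>1"
      "pdist (psubst \<sigma> Q2) \<mu>2" "pdist (psubst \<sigma>' Q2) \<nu>2" "lift rel \<mu>2 \<nu>2"
      by auto
    moreover have "lift rel (\<lambda>s. q * \<mu>1 s + (1 - q) * \<mu>2 s) (\<lambda>s. q * \<nu>1 s + (1 - q) * \<nu>2 s)"
      using calculation PChoice.prems by (intro lift_convex) auto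
    ultimately show ?case by (auto intro!: pdist_choice)
  qed auto
  then show ?thesis using that by blast
qed

lemma rel_cases [consumes 1, case_names rec pre sum G_tau nil]:
  assumes "rel A B"
  obtains (rec) Z D1 D2 where "A = NRec Z D1" "B = NRec Z D2"
      "rel (nsubst (NVar(Z := A)) D1) (nsubst (NVar(Z := B)) D2)"
  | (pre) a Q1 Q2 \<mu> \<nu> where "A = NPre a Q1" "B = NPre a Q2"
      "pdist Q1 \<mu>" "pdist Q2 \<nu>" "lift rel \<mu> \<nu>"
  | (sum) A1 A2 B1 B2 where "A = NSum A1 A2" "B = NSum B1 B2" "rel A1 B1" "rel A2 B2"
  | (G_tau) "A = G_tau" "B = H_tau"
  | (nil) "A = NNil" "B = NNil"
  using assms
proof (cases rule: rel.cases)
  case rel_G_H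
  have "G = NRec X G_body" "H = NRec X H_body" by (simp_all add: G_def H_def)
  moreover have "rel (nsubst (NVar(X := G)) G_body) (nsubst (NVar(X := H)) H_body)"
    unfolding G_unfold H_unfold using wf
    by (intro rel_NSum rel_G_tau_H_tau rel_nsubst) (auto intro: rel.rel_G_H)
  ultimately show ?thesis using rel_G_H by (intro rec) simp_all
next
  case (rel_context \<sigma> \<sigma>' C)
  show ?thesis
  proof (cases C)
    case (NPre a Q)
    obtain \<mu> \<nu> where "pdist (psubst \<sigma> Q) \<mu>" "pdist (psubst \<sigma>' Q) \<nu>" "lift rel \<mu> \<nu>"
      using rel_pdist[of Q \<sigma> \<sigma>'] rel_context NPre by auto
    then show ?thesis using pre rel_context NPre by simp
  next
    case (NRec Z D)
    have "\<forall>y. proc (\<sigma> y) \<and> proc (\<sigma>' y)" using rel_context rel_proc by blast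
    then have "nsubst (NVar(Z := A)) (nsubst (\<sigma>(Z := NVar Z)) D) = nsubst (\<sigma>(Z := A)) D"
      "nsubst (NVar(Z := B)) (nsubst (\<sigma>'(Z := NVar Z)) D) = nsubst (\<sigma>'(Z := B)) D"
      by (simp_all add: nsubst_rec_unfold proc_def)
    moreover have "rel (nsubst (\<sigma>(Z := A)) D) (nsubst (\<sigma>'(Z := B)) D)"
      using rel_context NRec assms by (intro rel_nsubst) auto
    ultimately show ?thesis using rec rel_context NRec by simp
  next
    case (NSum C1 C2)
    then show ?thesis using sum rel_context by (simp add: rel_nsubst)
  qed (use rel_context nil in auto)
qed (use G_tau sum in auto)

lemma trans_G_unfoldI: "trans (NSum G_tau (nsubst (\<lambda>_. G) F)) \<alpha> \<mu> \<Longrightarrow> trans G \<alpha> \<mu>"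
  unfolding G_def by (rule trans_rec) (simp add: G_unfold[unfolded G_def])

text \<open>\<open>G_tau\<close> moves with probability \<open>p\<close> to \<open>G + E\<close>, which can repeat that very move.\<close>

lemma tau_retry_G_tau:
  assumes "pdist (psubst (\<lambda>_. G) P) \<mu>"
  shows "tau_retry p G_tau \<mu>"
proof -
  let ?S = "NSum G (nsubst (\<lambda>_. G) E)"
  have step: "trans G_tau Tau (\<lambda>s. p * dirac ?S s + (1 - p) * \<mu> s)"
    unfolding G_tau_def choice_def using assms by (auto intro!: trans_pre pdist.intros)
  then have "trans ?S Tau (\<lambda>s. p * dirac ?S s + (1 - p) * \<mu> s)"
    by (intro trans_suml trans_G_unfoldI)
  moreover have "is_subdist \<mu>"
    using pdist_is_subdist[OF assms] wfp_psubst[OF wf(3)] proc_G by (simp add: proc_def)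
  ultimately show ?thesis using step unfolding tau_retry_def by blast
qed

lemma rel_simulation_left:
  assumes "trans A \<alpha> \<mu>" "rel A B"
  shows "\<exists>\<nu>. trans B \<alpha> \<nu> \<and> lift rel \<mu> \<nu>"
  using assms
proof (induction arbitrary: B rule: trans.induct)
  case (trans_pre Q \<mu> \<alpha>)
  from trans_pre.prems show ?case
  proof (cases rule: rel_cases)
    case (pre a Q1 Q2 \<mu>' \<nu>)
    then show ?thesis using pdist_unique[OF trans_pre.hyps] by (auto intro: trans.trans_pre)
  next
    case G_tau
    obtain \<mu>' \<nu> where "pdist (psubst (\<lambda>_. G) choice) \<mu>'" "pdist (psubst (\<lambda>_. H) choice) \<nu>"
      "lift rel \<mu>' \<nu>"
      using rel_pdist[of choice "\<lambda>_. G" "\<lambda>_. H"] wfp_choice rel_G_H by auto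
    then show ?thesis using G_tau trans_pre.hyps pdist_unique
      by (auto simp: G_tau_def H_tau_def intro!: trans_suml trans.trans_pre)
  qed auto
next
  case (trans_rec Z D \<alpha> \<mu>)
  from trans_rec.prems show ?case
    by (cases rule: rel_cases) (auto dest!: trans_rec.IH intro: trans.trans_rec simp: G_tau_def)
next
  case (trans_suml A1 \<alpha> \<mu> A2)
  from trans_suml.prems show ?case
    by (cases rule: rel_cases) (auto dest!: trans_suml.IH intro: trans.trans_suml simp: G_tau_def)
next
  case (trans_sumr A2 \<alpha> \<mu> A1)
  from trans_sumr.prems show ?case
    by (cases rule: rel_cases) (auto dest!: trans_sumr.IH intro: trans.trans_sumr simp: G_tau_def)
qed

lemma rel_simulation_right:
  assumes "trans B \<alpha> \<nu>" "rel A B"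
  shows "\<exists>\<mu>. trans_or_retry p A \<alpha> \<mu> \<and> lift rel \<mu> \<nu>"
  using assms
proof (induction arbitrary: A rule: trans.induct)
  case (trans_pre Q \<nu> \<alpha>)
  from trans_pre.prems show ?case
  proof (cases rule: rel_cases)
    case (pre a Q1 Q2 \<mu> \<nu>')
    then show ?thesis
      using pdist_unique[OF trans_pre.hyps] by (auto simp: trans_or_retry_def intro: trans.trans_pre)
  qed (auto simp: H_tau_def)
next
  case (trans_rec Z D \<alpha> \<nu>)
  from trans_rec.prems show ?case
  proof (cases rule: rel_cases)
    case (rec Z' D1 D2)
    then obtain \<mu> where "trans_or_retry p (nsubst (NVar(Z := A)) D1) \<alpha> \<mu>" "lift rel \<mu> \<nu>"
      using trans_rec.IH by auto
    then show ?thesis using rec by (auto intro: trans_or_retry_mono trans.trans_rec)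
  qed (auto simp: H_tau_def)
next
  case (trans_suml B1 \<alpha> \<nu> B2)
  from trans_suml.prems show ?case
  proof (cases rule: rel_cases)
    case (sum A1 A2 B1' B2')
    then obtain \<mu> where "trans_or_retry p A1 \<alpha> \<mu>" "lift rel \<mu> \<nu>"
      using trans_suml.IH by auto
    then show ?thesis using sum by (auto intro: trans_or_retry_mono trans.trans_suml)
  next
    case G_tau
    then have "\<alpha> = Tau" "pdist (psubst (\<lambda>_. H) choice) \<nu>"
      using trans_suml.hyps by (auto simp: H_tau_def elim: trans.cases)
    moreover obtain \<mu> \<nu>' where "pdist (psubst (\<lambda>_. G) choice) \<mu>"
      "pdist (psubst (\<lambda>_. H) choice) \<nu>'" "lift rel \<mu> \<nu>'"
      using rel_pdist[of choice "\<lambda>_. G" "\<lambda>_. H"] wfp_choice rel_G_H by auto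
    ultimately show ?thesis using G_tau pdist_unique
      by (auto simp: trans_or_retry_def G_tau_def intro: trans.trans_pre)
  qed auto
next
  case (trans_sumr B2 \<alpha> \<nu> B1)
  from trans_sumr.prems show ?case
  proof (cases rule: rel_cases)
    case (sum A1 A2 B1' B2')
    then obtain \<mu> where "trans_or_retry p A2 \<alpha> \<mu>" "lift rel \<mu> \<nu>"
      using trans_sumr.IH by auto
    then show ?thesis using sum by (auto intro: trans_or_retry_mono trans.trans_sumr)
  next
    case G_tau
    then have "\<alpha> = Tau" "pdist (psubst (\<lambda>_. H) P) \<nu>"
      using trans_sumr.hyps by (auto simp: H_tau_def elim: trans.cases)
    moreover obtain \<mu> \<nu>' where "pdist (psubst (\<lambda>_. G) P) \<mu>" "pdist (psubst (\<lambda>_. H) P) \<nu>'"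
      "lift rel \<mu> \<nu>'"
      using rel_pdist[of P "\<lambda>_. G" "\<lambda>_. H"] wf rel_G_H by auto
    ultimately show ?thesis using G_tau pdist_unique[of "psubst (\<lambda>_. H) P"] tau_retry_G_tau
      unfolding trans_or_retry_def by blast
  qed auto
qed

lemma weak_bisim_rel: "weak_bisim rel"
  unfolding weak_bisim_def
proof (intro allI impI conjI)
  fix A B assume "rel A B"
  then show "proc A" "proc B" using rel_proc by auto
  then have wfn: "wfn A" "wfn B" by (simp_all add: proc_def)
  show "\<exists>\<nu>. wtrans_hat (dirac B) \<alpha> \<nu> \<and> lift rel \<mu> \<nu>" if "trans A \<alpha> \<mu>" for \<alpha> \<mu>
    using rel_simulation_left[OF that \<open>rel A B\<close>] wtrans_hat_trans_or_retry[OF _ wfn(2)] p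
    unfolding trans_or_retry_def by fastforce
  show "\<exists>\<mu>. wtrans_hat (dirac A) \<alpha> \<mu> \<and> lift rel \<mu> \<nu>" if "trans B \<alpha> \<nu>" for \<alpha> \<nu>
    using rel_simulation_right[OF that \<open>rel A B\<close>] wtrans_hat_trans_or_retry[OF _ wfn(1)] p
    by fastforce
qed

lemma lift_rel_wbisim: "lift rel \<mu> \<nu> \<Longrightarrow> lift wbisim \<mu> \<nu>"
  using weak_bisim_rel by (auto simp: wbisim_def elim!: lift_mono intro!: exI[of _ rel])

lemma cong_closed_G_H: "cong_closed G H"
  unfolding cong_closed_def
proof (intro allI impI conjI)
  have wfn: "wfn G" "wfn H" using proc_G proc_H by (simp_all add: proc_def)
  show "\<exists>\<nu>. wtrans (dirac H) \<alpha> \<nu> \<and> lift wbisim \<mu> \<nu>" if "trans G \<alpha> \<mu>" for \<alpha> \<mu>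
    using rel_simulation_left[OF that rel_G_H] wtrans_trans_or_retry[OF _ wfn(2)] p lift_rel_wbisim
    unfolding trans_or_retry_def by fastforce
  show "\<exists>\<mu>. wtrans (dirac G) \<alpha> \<mu> \<and> lift wbisim \<mu> \<nu>" if "trans H \<alpha> \<nu>" for \<alpha> \<nu>
    using rel_simulation_right[OF that rel_G_H] wtrans_trans_or_retry[OF _ wfn(1)] p lift_rel_wbisim
    by fastforce
qed

end

lemma tau_retry_law_closing:
  fixes X :: 'x and \<sigma> :: "'x \<Rightarrow> ('a, 'x) nexp"
  assumes "wfn E" "wfn F" "wfp P" "0 < p" "p < 1" "\<forall>x. proc (\<sigma> x)"
  defines "\<tau> \<equiv> \<sigma>(X := NVar X)"
  shows "tau_retry_law X (nsubst \<tau> E) (nsubst \<tau> F) (psubst \<tau> P) p"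
proof
  have fv: "\<forall>y. fvn (\<tau> y) \<subseteq> {X}" and wf: "\<forall>y. wfn (\<tau> y)"
    using assms(6) by (auto simp: \<tau>_def proc_def)
  show "fvn (nsubst \<tau> E) \<subseteq> {X}" "fvn (nsubst \<tau> F) \<subseteq> {X}" "fvp (psubst \<tau> P) \<subseteq> {X}"
    using fvn_nsubst[of \<tau> E] fvn_nsubst[of \<tau> F] fvp_psubst[of \<tau> P] fv by blast+
  show "wfn (nsubst \<tau> E)" "wfn (nsubst \<tau> F)" "wfp (psubst \<tau> P)"
    using wfn_nsubst wfp_psubst wf assms(1-3) by blast+
qed (use assms in auto)

theorem mainTheorem4:
  fixes E F :: "('a, 'x) nexp" and P :: "('a, 'x) pexp" and X :: 'x and p :: real
  assumes "wfn E" and "wfn F" and "wfp P" and "0 < p" and "p < 1"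
  shows "cong
    (NRec X (NSum (NPre Tau (PChoice (PDirac (NSum (NVar X) E)) p P)) F))
    (NRec X (NSum (NSum (NPre Tau (PChoice (PDirac (NSum (NVar X) E)) p P)) (NPre Tau P)) F))"
  unfolding cong_def
proof (intro allI impI)
  fix \<sigma> :: "'x \<Rightarrow> ('a, 'x) nexp"
  assume "\<forall>x. proc (\<sigma> x)"
  define \<tau> where "\<tau> = \<sigma>(X := NVar X)"
  interpret tau_retry_law X "nsubst \<tau> E" "nsubst \<tau> F" "psubst \<tau> P" p
    unfolding \<tau>_def by (rule tau_retry_law_closing) fact+
  have "\<tau> X = NVar X" by (simp add: \<tau>_def)
  then show "cong_closed
     (nsubst \<sigma> (NRec X (NSum (NPre Tau (PChoice (PDirac (NSum (NVar X) E)) p P)) F)))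
     (nsubst \<sigma> (NRec X (NSum (NSum (NPre Tau (PChoice (PDirac (NSum (NVar X) E)) p P)) (NPre Tau P)) F)))"
    using cong_closed_G_H
    by (simp add: G_def H_def G_body_def H_body_def choice_def \<tau>_def[symmetric])
qed

end
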